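(* Let $U$ be an $N\times N$ unitary matrix with no zero entries, let $S,T$ be $N\times N$ enphased permutation matrices, let $V=SUT^{-1}$, and let $\Pi_S,\Pi_T$ be the permutation matrices with $S=D_S\Pi_S$, $T=D_T\Pi_T$ for unitary diagonal $D_S,D_T$. Then $\mathbf D(U)=\mathbf D(V)$, i.e. the multiplicities of the eigenvalue $1$ in the spectra of $\mathcal I_U$ and $\mathcal I_V$ are equal. Moreover $\mathbb V_V(1)=\Phi_{\Pi_S,\Pi_T}(\mathbb V_U(1))$, $\mathrm{Im}\,\mathbb V_V(1)=\Phi_{\Pi_S,\Pi_T}(\mathrm{Im}\,\mathbb V_U(1))$, and $\mathcal F_V=\Phi_{S,T}(\mathcal F_U)$.
   Context: An enphased permutation matrix is a product of a permutation matrix and a unitary diagonal matrix (factorization $D\Pi$ is unique). $\circ$ is the entrywise product. For unitary $W$ with no zero entries: $\mathcal C_W(F)=(F\circ W)W^*$, $\mathcal D_W(F)=W(\overline F\circ W)^*$, $\mathcal I_W=\mathcal C_W^{-1}\mathcal D_W$ (operators on $\mathbb C^{N\times N}$); $\mathbb V_W(\lambda)$ is the complex eigenspace of $\mathcal I_W$ for eigenvalue $\lambda$, and $\mathrm{Im}\,\mathbb V_W(\lambda)$ is the real space of purely imaginary matrices in $\mathbb V_W(\lambda)$. The feasible space is $\mathcal F_W=\{iR\circ W:\ R \text{ real } N\times N,\ (iR\circ W)W^* \text{ antihermitian}\}$ (equivalently, the intersection of the tangent spaces at $W$ to the unitary group and to the manifold of matrices whose entries have the same moduli as those of $W$), and the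 undephased defect is $\mathbf D(W)=\dim_{\mathbb R}\mathcal F_W$. $\Phi_{A,B}$ denotes the operator $X\mapsto AXB^{-1}$. *)

theory Defs
  imports "HOL-Analysis.Analysis"
begin

type_synonym 'n cmat = "complex ^ 'n ^ 'n"

definition ctrans :: "'n::finite cmat \<Rightarrow> 'n cmat" where
  "ctrans M = (\<chi> i j. cnj (M $ j $ i))"

definition hprod :: "'n::finite cmat \<Rightarrow> 'n cmat \<Rightarrow> 'n cmat" (infixl "\<circ>\<^sub>H" 70) where
  "hprod A B = (\<chi> i j. A $ i $ j * B $ i $ j)"

definition cscale :: "complex \<Rightarrow> 'n::finite cmat \<Rightarrow> 'n cmat" where
  "cscale c M = (\<chi> i j. c * M $ i $ j)"

definition unitary :: "'n::finite cmat \<Rightarrow> bool" where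
  "unitary U \<longleftrightarrow> U ** ctrans U = mat 1 \<and> ctrans U ** U = mat 1"

definition no_zero_entries :: "'n::finite cmat \<Rightarrow> bool" where
  "no_zero_entries U \<longleftrightarrow> (\<forall>i j. U $ i $ j \<noteq> 0)"

definition unitary_diagonal :: "'n::finite cmat \<Rightarrow> bool" where
  "unitary_diagonal D \<longleftrightarrow> (\<forall>i j. i \<noteq> j \<longrightarrow> D $ i $ j = 0) \<and> (\<forall>i. cmod (D $ i $ i) = 1)"

definition permutation_matrix :: "'n::finite cmat \<Rightarrow> bool" where
  "permutation_matrix P \<longleftrightarrow> (\<exists>p. p permutes (UNIV :: 'n set) \<and>
      P = (\<chi> i j. if i = p j then 1 else 0))"

definition enphased_permutation :: "'n::finite cmat \<Rightarrow> bool" where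
  "enphased_permutation S \<longleftrightarrow> (\<exists>D P. unitary_diagonal D \<and> permutation_matrix P \<and> S = D ** P)"

definition opC :: "'n::finite cmat \<Rightarrow> 'n cmat \<Rightarrow> 'n cmat" where
  "opC W F = (F \<circ>\<^sub>H W) ** ctrans W"

definition opD :: "'n::finite cmat \<Rightarrow> 'n cmat \<Rightarrow> 'n cmat" where
  "opD W F = W ** ctrans ((\<chi> i j. cnj (F $ i $ j)) \<circ>\<^sub>H W)"

definition opI :: "'n::finite cmat \<Rightarrow> 'n cmat \<Rightarrow> 'n cmat" where
  "opI W = inv (opC W) \<circ> opD W"

definition eigsp :: "'n::finite cmat \<Rightarrow> complex \<Rightarrow> 'n cmat set" where
  "eigsp W lam = {F. opI W F = cscale lam F}"

definition Im_eigsp :: "'n::finite cmat \<Rightarrow> complex \<Rightarrow> 'n cmat set" where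
  "Im_eigsp W lam = {F \<in> eigsp W lam. \<forall>i j. Re (F $ i $ j) = 0}"

definition feasible :: "'n::finite cmat \<Rightarrow> 'n cmat set" where
  "feasible W = {F. \<exists>R :: real ^ 'n ^ 'n.
      F = (\<chi> i j. \<i> * complex_of_real (R $ i $ j)) \<circ>\<^sub>H W \<and>
      ctrans (F ** ctrans W) = - (F ** ctrans W)}"

text \<open>undephased defect: real dimension of the feasible space\<close>
definition defect :: "'n::finite cmat \<Rightarrow> nat" where
  "defect W = dim (feasible W)"

definition Phi :: "'n::finite cmat \<Rightarrow> 'n cmat \<Rightarrow> 'n cmat \<Rightarrow> 'n cmat" where
  "Phi A B X = A ** X ** matrix_inv B"

end

theory Submission
  imports Defs
begin

text \<open>
  Writing \<open>S = D\<^sub>S \<Pi>\<^sub>S\<close> and \<open>T = D\<^sub>T \<Pi>\<^sub>T\<close>, the map \<open>\<Phi>\<^sub>S\<^sub>,\<^sub>T\<close> merely permutes the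
  rows and columns of a matrix and multiplies them by unimodular phases. Such a rephasing
  \<open>\<rho>\<close> is an invertible real-linear map compatible with products, adjoints and entrywise
  products (the phases can all be put on one factor), so it maps the feasible space of
  \<open>U\<close> onto that of \<open>V = \<rho> U\<close>. Moreover \<open>C\<^sub>V\<close> and \<open>D\<^sub>V\<close>, evaluated on the phase-free
  rephasing \<open>\<rho>\<^sub>0 = \<Phi>\<^bsub>\<Pi>\<^sub>S,\<Pi>\<^sub>T\<^esub>\<close> of \<open>F\<close>, are one and the same rephasing of \<open>C\<^sub>U F\<close> and
  \<open>D\<^sub>U F\<close>; hence \<open>\<rho>\<^sub>0\<close> conjugates \<open>I\<^sub>U\<close> into \<open>I\<^sub>V\<close> and maps every eigenspace of \<open>I\<^sub>U\<close>
  onto the corresponding eigenspace of \<open>I\<^sub>V\<close>.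
\<close>

definition rephase ::
    "('n::finite \<Rightarrow> complex) \<Rightarrow> ('n \<Rightarrow> complex) \<Rightarrow> ('n \<Rightarrow> 'n) \<Rightarrow> ('n \<Rightarrow> 'n) \<Rightarrow> 'n cmat \<Rightarrow> 'n cmat"
  where "rephase a b s r X = (\<chi> i j. a i * X $ s i $ r j * b j)"

lemma rephase_nth [simp]: "rephase a b s r X $ i $ j = a i * X $ s i $ r j * b j"
  by (simp add: rephase_def)

lemma rephase_id: "rephase (\<lambda>_. 1) (\<lambda>_. 1) id id X = X"
  by (simp add: vec_eq_iff)

lemma rephase_uminus: "rephase a b s r (- X) = - rephase a b s r X"
  by (simp add: vec_eq_iff)

lemma rephase_cscale: "rephase a b s r (cscale c X) = cscale c (rephase a b s r X)"
  by (simp add: cscale_def vec_eq_iff mult.left_commute)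

lemma linear_rephase: "linear (rephase a b s r)"
  by (rule linearI) (simp_all add: vec_eq_iff algebra_simps)

lemma rephase_ctrans:
  "ctrans (rephase a b s r X) = rephase (\<lambda>i. cnj (b i)) (\<lambda>j. cnj (a j)) r s (ctrans X)"
  by (simp add: ctrans_def vec_eq_iff mult.commute mult.left_commute)

lemma rephase_hprod:
  "rephase a b s r (X \<circ>\<^sub>H Y) = rephase (\<lambda>_. 1) (\<lambda>_. 1) s r X \<circ>\<^sub>H rephase a b s r Y"
  by (simp add: hprod_def vec_eq_iff mult.commute mult.left_commute)

lemma rephase_mult:
  assumes "bij r" and "\<And>k. b k * c k = 1"
  shows "rephase a b s r X ** rephase c d r t Y = rephase a d s t (X ** Y)"
proof -
  have "(\<Sum>k\<in>UNIV. a i * X $ s i $ r k * b k * (c k * Y $ r k $ t j * d j))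
      = a i * (\<Sum>k\<in>UNIV. X $ s i $ k * Y $ k $ t j) * d j" for i j
  proof -
    have "(\<Sum>k\<in>UNIV. a i * X $ s i $ r k * b k * (c k * Y $ r k $ t j * d j))
        = (\<Sum>k\<in>UNIV. a i * (X $ s i $ r k * Y $ r k $ t j) * d j * (b k * c k))"
      by (simp add: algebra_simps)
    also have "\<dots> = a i * (\<Sum>k\<in>UNIV. X $ s i $ r k * Y $ r k $ t j) * d j"
      by (simp add: assms(2) sum_distrib_left sum_distrib_right)
    also have "(\<Sum>k\<in>UNIV. X $ s i $ r k * Y $ r k $ t j) = (\<Sum>k\<in>UNIV. X $ s i $ k * Y $ k $ t j)"
      using sum.reindex_bij_betw[of r UNIV UNIV "\<lambda>k. X $ s i $ k * Y $ k $ t j"] assms(1) by simp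
    finally show ?thesis .
  qed
  then show ?thesis
    by (simp add: matrix_matrix_mult_def vec_eq_iff)
qed

lemma rephase_mat_1:
  assumes "inj s" and "\<And>i. a i * c i = 1"
  shows "rephase a c s s (mat 1) = mat 1"
  using assms by (auto simp: vec_eq_iff mat_def inj_eq)

lemma unimodular_cnj_mult: "cmod z = 1 \<Longrightarrow> cnj z * z = 1"
  by (metis complex_norm_square mult.commute of_real_1 power_one)

lemma unimodular_mult_cnj: "cmod z = 1 \<Longrightarrow> z * cnj z = 1"
  by (metis complex_norm_square of_real_1 power_one)

definition inv_phase :: "('n \<Rightarrow> complex) \<Rightarrow> ('n \<Rightarrow> 'n) \<Rightarrow> 'n \<Rightarrow> complex"
  where "inv_phase a s = (\<lambda>i. cnj (a (inv s i)))"

lemma inv_phase_1 [simp]: "inv_phase (\<lambda>_. 1) s = (\<lambda>_. 1)"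
  by (simp add: inv_phase_def)

lemma bij_opC:
  assumes "unitary W" and "no_zero_entries W"
  shows "bij (opC W)"
proof (rule o_bij[where g = "\<lambda>G. (G ** W) \<circ>\<^sub>H (\<chi> i j. inverse (W $ i $ j))"])
  have nonzero: "W $ i $ j \<noteq> 0" for i j
    using assms(2) by (simp add: no_zero_entries_def)
  have "opC W F ** W = F \<circ>\<^sub>H W" for F
    using assms(1) by (metis opC_def unitary_def matrix_mul_assoc matrix_mul_rid)
  then show "(\<lambda>G. (G ** W) \<circ>\<^sub>H (\<chi> i j. inverse (W $ i $ j))) \<circ> opC W = id"
    by (simp add: fun_eq_iff hprod_def vec_eq_iff nonzero)
  have "((G ** W) \<circ>\<^sub>H (\<chi> i j. inverse (W $ i $ j))) \<circ>\<^sub>H W = G ** W" for G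
    by (simp add: hprod_def vec_eq_iff nonzero)
  then show "opC W \<circ> (\<lambda>G. (G ** W) \<circ>\<^sub>H (\<chi> i j. inverse (W $ i $ j))) = id"
    using assms(1) by (simp add: fun_eq_iff opC_def unitary_def flip: matrix_mul_assoc)
qed

lemma opI_eq_iff: "bij (opC W) \<Longrightarrow> opI W F = G \<longleftrightarrow> opD W F = opC W G"
  by (metis bij_inv_eq_iff comp_apply opI_def)

locale rephasing =
  fixes a b :: "'n::finite \<Rightarrow> complex" and s r :: "'n \<Rightarrow> 'n"
  assumes bij_rows: "bij s" and bij_cols: "bij r"
    and unimodular_rows: "\<And>i. cmod (a i) = 1" and unimodular_cols: "\<And>j. cmod (b j) = 1"
begin

lemma inverse_rephasing: "rephasing (inv_phase a s) (inv_phase b r) (inv s) (inv r)"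
  by unfold_locales
    (simp_all add: inv_phase_def bij_rows bij_cols bij_imp_bij_inv unimodular_rows unimodular_cols)

lemma unit_rephasing: "rephasing (\<lambda>_. 1) (\<lambda>_. 1) s r"
  by unfold_locales (simp_all add: bij_rows bij_cols)

lemma rephase_inverse_left:
  "rephase (inv_phase a s) (inv_phase b r) (inv s) (inv r) (rephase a b s r X) = X"
proof -
  have "inv_phase a s i * a (inv s i) = 1" "b (inv r j) * inv_phase b r j = 1" for i j
    by (simp_all add: inv_phase_def unimodular_rows unimodular_cols unimodular_cnj_mult
        unimodular_mult_cnj)
  moreover have "rephase (inv_phase a s) (inv_phase b r) (inv s) (inv r) (rephase a b s r X) $ i $ j
      = (inv_phase a s i * a (inv s i)) * X $ i $ j * (b (inv r j) * inv_phase b r j)" for i j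
    by (simp add: bij_is_surj[OF bij_rows, THEN surj_f_inv_f]
        bij_is_surj[OF bij_cols, THEN surj_f_inv_f] mult_ac)
  ultimately show ?thesis
    by (simp add: vec_eq_iff)
qed

lemma rephase_inverse_right:
  "rephase a b s r (rephase (inv_phase a s) (inv_phase b r) (inv s) (inv r) X) = X"
proof -
  have "a i * inv_phase a s (s i) = 1" "inv_phase b r (r j) * b j = 1" for i j
    by (simp_all add: inv_phase_def bij_is_inj[OF bij_rows, THEN inv_f_f]
        bij_is_inj[OF bij_cols, THEN inv_f_f] unimodular_rows unimodular_cols
        unimodular_cnj_mult unimodular_mult_cnj)
  moreover have "rephase a b s r (rephase (inv_phase a s) (inv_phase b r) (inv s) (inv r) X) $ i $ j
      = (a i * inv_phase a s (s i)) * X $ i $ j * (inv_phase b r (r j) * b j)" for i j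
    by (simp add: bij_is_inj[OF bij_rows, THEN inv_f_f] bij_is_inj[OF bij_cols, THEN inv_f_f]
        mult_ac)
  ultimately show ?thesis
    by (simp add: vec_eq_iff)
qed

lemma unitary_rephase:
  assumes "unitary W"
  shows "unitary (rephase a b s r W)"
proof -
  have "rephase a b s r W ** ctrans (rephase a b s r W) = rephase a (\<lambda>i. cnj (a i)) s s (W ** ctrans W)"
    by (simp add: rephase_ctrans rephase_mult bij_cols unimodular_cols unimodular_mult_cnj)
  moreover have "ctrans (rephase a b s r W) ** rephase a b s r W = rephase (\<lambda>i. cnj (b i)) b r r (ctrans W ** W)"
    by (simp add: rephase_ctrans rephase_mult bij_rows unimodular_rows unimodular_cnj_mult)
  ultimately show ?thesis
    using assms by (simp add: unitary_def rephase_mat_1 bij_is_inj bij_rows bij_cols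
        unimodular_rows unimodular_cols unimodular_cnj_mult unimodular_mult_cnj)
qed

lemma no_zero_entries_rephase: "no_zero_entries W \<Longrightarrow> no_zero_entries (rephase a b s r W)"
  using unimodular_rows unimodular_cols
  by (simp add: no_zero_entries_def) (metis norm_zero zero_neq_one)

lemma opC_rephase:
  "opC (rephase a b s r W) (rephase (\<lambda>_. 1) (\<lambda>_. 1) s r F)
    = rephase a (\<lambda>i. cnj (a i)) s s (opC W F)"
  by (simp add: opC_def rephase_ctrans rephase_mult bij_cols unimodular_cols unimodular_mult_cnj
      flip: rephase_hprod)

lemma opD_rephase:
  "opD (rephase a b s r W) (rephase (\<lambda>_. 1) (\<lambda>_. 1) s r F)
    = rephase a (\<lambda>i. cnj (a i)) s s (opD W F)"
proof -
  have "(\<chi> i j. cnj (rephase (\<lambda>_. 1) (\<lambda>_. 1) s r F $ i $ j))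
      = rephase (\<lambda>_. 1) (\<lambda>_. 1) s r (\<chi> i j. cnj (F $ i $ j))"
    by (simp add: vec_eq_iff)
  then show ?thesis
    by (simp add: opD_def rephase_ctrans rephase_mult bij_cols unimodular_cols unimodular_mult_cnj
        flip: rephase_hprod)
qed

lemma opI_rephase:
  assumes "unitary W" and "no_zero_entries W"
  shows "opI (rephase a b s r W) (rephase (\<lambda>_. 1) (\<lambda>_. 1) s r F)
    = rephase (\<lambda>_. 1) (\<lambda>_. 1) s r (opI W F)"
proof -
  have "opD W F = opC W (opI W F)"
    using opI_eq_iff[OF bij_opC[OF assms]] by blast
  then show ?thesis
    by (simp add: opI_eq_iff bij_opC assms unitary_rephase no_zero_entries_rephase
        opC_rephase opD_rephase)
qed

lemma rephase_mem_eigsp: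
  assumes "unitary W" and "no_zero_entries W" and "F \<in> eigsp W lam"
  shows "rephase (\<lambda>_. 1) (\<lambda>_. 1) s r F \<in> eigsp (rephase a b s r W) lam"
  using assms by (simp add: eigsp_def opI_rephase rephase_cscale)

lemma rephase_mem_Im_eigsp:
  assumes "unitary W" and "no_zero_entries W" and "F \<in> Im_eigsp W lam"
  shows "rephase (\<lambda>_. 1) (\<lambda>_. 1) s r F \<in> Im_eigsp (rephase a b s r W) lam"
  using assms by (simp add: Im_eigsp_def rephase_mem_eigsp)

lemma rephase_mem_feasible:
  assumes "F \<in> feasible W"
  shows "rephase a b s r F \<in> feasible (rephase a b s r W)"
proof -
  obtain R :: "real ^ 'n ^ 'n" where
    R: "F = (\<chi> i j. \<i> * complex_of_real (R $ i $ j)) \<circ>\<^sub>H W"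
    and antihermitian: "ctrans (F ** ctrans W) = - (F ** ctrans W)"
    using assms unfolding feasible_def by blast
  define R' :: "real ^ 'n ^ 'n" where "R' = (\<chi> i j. R $ s i $ r j)"
  have "rephase a b s r F = (\<chi> i j. \<i> * complex_of_real (R' $ i $ j)) \<circ>\<^sub>H rephase a b s r W"
    by (simp add: R rephase_hprod) (simp add: R'_def vec_eq_iff hprod_def)
  moreover have "rephase a b s r F ** ctrans (rephase a b s r W)
      = rephase a (\<lambda>i. cnj (a i)) s s (F ** ctrans W)"
    by (simp add: rephase_ctrans rephase_mult bij_cols unimodular_cols unimodular_mult_cnj)
  then have "ctrans (rephase a b s r F ** ctrans (rephase a b s r W))
      = - (rephase a b s r F ** ctrans (rephase a b s r W))"
    by (simp only: rephase_ctrans antihermitian rephase_uminus complex_cnj_cnj)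
  ultimately show ?thesis
    unfolding feasible_def by blast
qed

lemma inj_rephase: "inj (rephase a b s r)"
  by (metis injI rephase_inverse_left)

lemma rephase_image_eqI:
  assumes "\<And>X. X \<in> A \<Longrightarrow> rephase a b s r X \<in> B"
    and "\<And>Y. Y \<in> B \<Longrightarrow> rephase (inv_phase a s) (inv_phase b r) (inv s) (inv r) Y \<in> A"
  shows "rephase a b s r ` A = B"
proof (rule bij_betw_imp_surj_on, rule bij_betw_byWitness)
  show "rephase a b s r ` A \<subseteq> B" "rephase (inv_phase a s) (inv_phase b r) (inv s) (inv r) ` B \<subseteq> A"
    using assms by blast+
qed (simp_all add: rephase_inverse_left rephase_inverse_right)

lemma eigsp_rephase:
  assumes "unitary W" and "no_zero_entries W"
  shows "eigsp (rephase a b s r W) lam = rephase (\<lambda>_. 1) (\<lambda>_. 1) s r ` eigsp W lam"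
proof -
  interpret unit: rephasing "\<lambda>_. 1" "\<lambda>_. 1" s r
    by (rule unit_rephasing)
  have "Y \<in> eigsp (rephase a b s r W) lam
      \<Longrightarrow> rephase (\<lambda>_. 1) (\<lambda>_. 1) (inv s) (inv r) Y \<in> eigsp W lam" for Y
    using rephasing.rephase_mem_eigsp[OF inverse_rephasing unitary_rephase[OF assms(1)]
        no_zero_entries_rephase[OF assms(2)]]
    by (simp add: rephase_inverse_left)
  then show ?thesis
    by (intro unit.rephase_image_eqI[symmetric]) (simp_all add: assms rephase_mem_eigsp)
qed

lemma Im_eigsp_rephase:
  assumes "unitary W" and "no_zero_entries W"
  shows "Im_eigsp (rephase a b s r W) lam = rephase (\<lambda>_. 1) (\<lambda>_. 1) s r ` Im_eigsp W lam"
proof -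
  interpret unit: rephasing "\<lambda>_. 1" "\<lambda>_. 1" s r
    by (rule unit_rephasing)
  have "Y \<in> Im_eigsp (rephase a b s r W) lam
      \<Longrightarrow> rephase (\<lambda>_. 1) (\<lambda>_. 1) (inv s) (inv r) Y \<in> Im_eigsp W lam" for Y
    using rephasing.rephase_mem_Im_eigsp[OF inverse_rephasing unitary_rephase[OF assms(1)]
        no_zero_entries_rephase[OF assms(2)]]
    by (simp add: rephase_inverse_left)
  then show ?thesis
    by (intro unit.rephase_image_eqI[symmetric]) (simp_all add: assms rephase_mem_Im_eigsp)
qed

lemma feasible_rephase: "feasible (rephase a b s r W) = rephase a b s r ` feasible W"
proof -
  have "Y \<in> feasible (rephase a b s r W)
      \<Longrightarrow> rephase (inv_phase a s) (inv_phase b r) (inv s) (inv r) Y \<in> feasible W" for Y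
    using rephasing.rephase_mem_feasible[OF inverse_rephasing] by (metis rephase_inverse_left)
  then show ?thesis
    by (intro rephase_image_eqI[symmetric]) (simp_all add: rephase_mem_feasible)
qed

lemma defect_rephase: "defect (rephase a b s r W) = defect W"
  unfolding defect_def feasible_rephase
  using dim_image_eq[OF linear_rephase] inj_rephase by (metis inj_on_subset subset_UNIV)

end

lemma matrix_inv_eqI:
  fixes A :: "'a::comm_semiring_1 ^ 'n ^ 'n"
  assumes "A ** B = mat 1" and "B ** A = mat 1"
  shows "matrix_inv A = B"
proof -
  have inverse: "matrix_inv A ** A = mat 1"
    unfolding matrix_inv_def by (rule someI2[where a = B]) (simp_all add: assms)
  have "matrix_inv A = matrix_inv A ** (A ** B)"
    by (simp add: assms matrix_mul_rid)
  also have "\<dots> = B"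
    by (simp add: matrix_mul_assoc inverse)
  finally show ?thesis .
qed

lemma ctrans_mat_1 [simp]: "ctrans (mat 1) = mat 1"
  by (simp add: ctrans_def mat_def vec_eq_iff)

lemma unitary_mat_1: "unitary (mat 1)"
  by (simp add: unitary_def)

lemma matrix_inv_unitary: "unitary U \<Longrightarrow> matrix_inv U = ctrans U"
  by (simp add: unitary_def matrix_inv_eqI)

lemma diagonal_mult:
  assumes "\<And>i j. i \<noteq> j \<Longrightarrow> D $ i $ j = 0"
  shows "D ** X = rephase (\<lambda>i. D $ i $ i) (\<lambda>_. 1) id id X"
proof -
  have "(\<Sum>k\<in>UNIV. D $ i $ k * X $ k $ j) = D $ i $ i * X $ i $ j" for i j
    using assms by (subst sum.remove[of _ i]) (simp_all add: sum.neutral)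
  then show ?thesis
    by (simp add: matrix_matrix_mult_def vec_eq_iff)
qed

lemma enphased_permutation_rephase:
  assumes "unitary_diagonal D" and "permutation_matrix P"
  obtains p where "p permutes UNIV"
    and "P = rephase (\<lambda>_. 1) (\<lambda>_. 1) (inv p) id (mat 1)"
    and "D ** P = rephase (\<lambda>i. D $ i $ i) (\<lambda>_. 1) (inv p) id (mat 1)"
proof -
  obtain p where p: "p permutes UNIV" and P: "P = (\<chi> i j. if i = p j then 1 else 0)"
    using assms(2) unfolding permutation_matrix_def by blast
  then have "P = rephase (\<lambda>_. 1) (\<lambda>_. 1) (inv p) id (mat 1)"
    by (auto simp: vec_eq_iff mat_def permutes_inverses)
  moreover have "D ** P = rephase (\<lambda>i. D $ i $ i) (\<lambda>_. 1) (inv p) id (mat 1)"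
    using assms(1) by (simp add: unitary_diagonal_def diagonal_mult calculation vec_eq_iff)
  ultimately show ?thesis
    using p that by blast
qed

lemma Phi_rephase_mat_1:
  assumes "bij s" and "bij t" and "\<And>i. cmod (d i) = 1" and "\<And>i. cmod (e i) = 1"
  shows "Phi (rephase d (\<lambda>_. 1) s id (mat 1)) (rephase e (\<lambda>_. 1) t id (mat 1))
    = rephase d (\<lambda>j. cnj (e j)) s t"
proof
  fix X
  have "rephasing e (\<lambda>_. 1) t id"
    using assms by unfold_locales simp_all
  then have "matrix_inv (rephase e (\<lambda>_. 1) t id (mat 1)) = rephase (\<lambda>_. 1) (\<lambda>j. cnj (e j)) id t (mat 1)"
    by (simp add: matrix_inv_unitary rephasing.unitary_rephase unitary_mat_1 rephase_ctrans)
  moreover have "rephase d (\<lambda>_. 1) s id (mat 1) ** rephase (\<lambda>_. 1) (\<lambda>_. 1) id id X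
      ** rephase (\<lambda>_. 1) (\<lambda>j. cnj (e j)) id t (mat 1) = rephase d (\<lambda>j. cnj (e j)) s t X"
    by (simp add: rephase_mult matrix_mul_lid matrix_mul_rid)
  ultimately show "Phi (rephase d (\<lambda>_. 1) s id (mat 1)) (rephase e (\<lambda>_. 1) t id (mat 1)) X
      = rephase d (\<lambda>j. cnj (e j)) s t X"
    by (simp add: Phi_def rephase_id)
qed

theorem corollary3p6:
  fixes U S T D_S P_S D_T P_T :: "'n::finite cmat"
  assumes "unitary U" and "no_zero_entries U"
    and "unitary_diagonal D_S" and "permutation_matrix P_S" and "S = D_S ** P_S"
    and "unitary_diagonal D_T" and "permutation_matrix P_T" and "T = D_T ** P_T"
  shows "defect U = defect (S ** U ** matrix_inv T)
    \<and> eigsp (S ** U ** matrix_inv T) 1 = Phi P_S P_T ` eigsp U 1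
    \<and> Im_eigsp (S ** U ** matrix_inv T) 1 = Phi P_S P_T ` Im_eigsp U 1
    \<and> feasible (S ** U ** matrix_inv T) = Phi S T ` feasible U"
proof -
  obtain p where p: "p permutes UNIV"
    and P_S: "P_S = rephase (\<lambda>_. 1) (\<lambda>_. 1) (inv p) id (mat 1)"
    and S: "D_S ** P_S = rephase (\<lambda>i. D_S $ i $ i) (\<lambda>_. 1) (inv p) id (mat 1)"
    by (rule enphased_permutation_rephase[OF assms(3,4)])
  obtain q where q: "q permutes UNIV"
    and P_T: "P_T = rephase (\<lambda>_. 1) (\<lambda>_. 1) (inv q) id (mat 1)"
    and T: "D_T ** P_T = rephase (\<lambda>i. D_T $ i $ i) (\<lambda>_. 1) (inv q) id (mat 1)"
    by (rule enphased_permutation_rephase[OF assms(6,7)])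
  have bij: "bij (inv p)" "bij (inv q)"
    using permutes_bij[OF permutes_inv[OF p]] permutes_bij[OF permutes_inv[OF q]] by blast+
  have unimodular: "cmod (D_S $ i $ i) = 1" "cmod (D_T $ i $ i) = 1" for i
    using assms(3,6) by (simp_all add: unitary_diagonal_def)
  interpret rephasing "\<lambda>i. D_S $ i $ i" "\<lambda>j. cnj (D_T $ j $ j)" "inv p" "inv q"
    using bij unimodular by unfold_locales simp_all
  have Phi_S_T: "Phi S T = rephase (\<lambda>i. D_S $ i $ i) (\<lambda>j. cnj (D_T $ j $ j)) (inv p) (inv q)"
    unfolding assms(5,8) S T using bij unimodular by (rule Phi_rephase_mat_1)
  have "Phi P_S P_T = rephase (\<lambda>_. 1) (\<lambda>_. 1) (inv p) (inv q)"
    unfolding P_S P_T using Phi_rephase_mat_1[OF bij] by simp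
  moreover have "S ** U ** matrix_inv T = rephase (\<lambda>i. D_S $ i $ i) (\<lambda>j. cnj (D_T $ j $ j)) (inv p) (inv q) U"
    by (simp flip: Phi_S_T add: Phi_def)
  ultimately show ?thesis
    using assms(1,2) by (simp add: Phi_S_T defect_rephase eigsp_rephase Im_eigsp_rephase feasible_rephase)
qed

end
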